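(* Let $A$ be an $M\times N$ matrix whose columns form a frame for $\mathcal{H}_M$ and let $c$ be a nonzero scalar. Then the columns of the $2M\times 2N$ matrix $$B=\begin{bmatrix}cA & cA\\ cA & -cA\end{bmatrix}$$ form a frame for $\mathcal{H}_{2M}$. Moreover, $B$ represents a tight frame if $A$ does, and $B$ represents an equal norm frame if $A$ does.
   Context: $\mathcal{H}_M$ denotes an $M$-dimensional Hilbert space, identified with $\mathbb{R}^M$ (or $\mathbb{C}^M$) via a fixed orthonormal basis. A family $\{f_i\}_{i=1}^N$ is a frame if there are $0<A\le B<\infty$ with $A\|f\|^2\le\sum_i|\langle f,f_i\rangle|^2\le B\|f\|^2$ for all $f$; tight if one can take $A=B$; equal norm if all $\|f_i\|$ are equal. A matrix represents a frame if its columns form one. *)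

theory Defs
  imports Complex_Main "Jordan_Normal_Form.Matrix"
begin

text \<open>H_M is identified with complex^M (vectors of dimension M) via the standard basis.
  A matrix represents a frame if its columns form one.\<close>

definition hinner :: "complex vec \<Rightarrow> complex vec \<Rightarrow> complex" where
  "hinner f g = (\<Sum>k<dim_vec f. f $ k * cnj (g $ k))"

definition hnorm_sq :: "complex vec \<Rightarrow> real" where
  "hnorm_sq f = (\<Sum>k<dim_vec f. (cmod (f $ k))^2)"

definition frame_sum :: "complex mat \<Rightarrow> complex vec \<Rightarrow> real" where
  "frame_sum A f = (\<Sum>i<dim_col A. (cmod (hinner f (col A i)))^2)"

definition is_frame :: "complex mat \<Rightarrow> bool" where
  "is_frame A \<longleftrightarrow> (\<exists>a b. 0 < a \<and> a \<le> b \<and>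
      (\<forall>f \<in> carrier_vec (dim_row A).
          a * hnorm_sq f \<le> frame_sum A f \<and> frame_sum A f \<le> b * hnorm_sq f))"

definition is_tight_frame :: "complex mat \<Rightarrow> bool" where
  "is_tight_frame A \<longleftrightarrow> (\<exists>a. 0 < a \<and>
      (\<forall>f \<in> carrier_vec (dim_row A). frame_sum A f = a * hnorm_sq f))"

definition is_equal_norm_frame :: "complex mat \<Rightarrow> bool" where
  "is_equal_norm_frame A \<longleftrightarrow> is_frame A \<and>
      (\<exists>r. \<forall>i<dim_col A. hnorm_sq (col A i) = r)"

end

theory Submission
  imports Defs
begin

text \<open>Split \<open>f\<close> of dimension \<open>2M\<close> into halves \<open>(u, v)\<close>. The inner products of \<open>f\<close> with the first
  and last \<open>N\<close> columns of \<open>B\<close> are \<open>cnj c\<close> times those of \<open>u + v\<close> and \<open>u - v\<close> with the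
  columns of \<open>A\<close>, so the frame sum of \<open>B\<close> at \<open>f\<close> is \<open>|c|\<^sup>2\<close> times the sum of the frame sums
  of \<open>A\<close> at \<open>u + v\<close> and \<open>u - v\<close>. By the parallelogram law
  \<open>\<parallel>u + v\<parallel>\<^sup>2 + \<parallel>u - v\<parallel>\<^sup>2 = 2 \<parallel>f\<parallel>\<^sup>2\<close>, so frame bounds \<open>a, b\<close> of \<open>A\<close> give frame bounds
  \<open>2 |c|\<^sup>2 a, 2 |c|\<^sup>2 b\<close> of \<open>B\<close>. Every column of \<open>B\<close> is a column of \<open>A\<close> stacked on
  \<open>\<plusminus>\<close> itself and scaled by \<open>c\<close>, hence has squared norm \<open>2 |c|\<^sup>2\<close> times that column's.\<close>

definition doubled_frame_mat :: "complex \<Rightarrow> complex mat \<Rightarrow> complex mat" where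
  "doubled_frame_mat c A = four_block_mat (c \<cdot>\<^sub>m A) (c \<cdot>\<^sub>m A) (c \<cdot>\<^sub>m A) (- (c \<cdot>\<^sub>m A))"

lemma sum_lessThan_add:
  "(\<Sum>k<m + (n::nat). g k) = (\<Sum>k<m. g k) + (\<Sum>k<n. g (m + k))"
  by (induction n) (simp_all add: add.assoc)

lemma hinner_add_left:
  assumes "u \<in> carrier_vec n" "v \<in> carrier_vec n"
  shows "hinner (u + v) x = hinner u x + hinner v x"
  using assms unfolding hinner_def by (simp add: sum.distrib[symmetric] algebra_simps)

lemma hinner_minus_left:
  assumes "u \<in> carrier_vec n" "v \<in> carrier_vec n"
  shows "hinner (u - v) x = hinner u x - hinner v x"
  using assms unfolding hinner_def by (simp add: sum_subtractf[symmetric] algebra_simps)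

lemma hinner_smult_right:
  assumes "dim_vec x = dim_vec f"
  shows "hinner f (c \<cdot>\<^sub>v x) = cnj c * hinner f x"
  using assms unfolding hinner_def by (simp add: sum_distrib_left algebra_simps)

lemma hinner_uminus_right:
  assumes "dim_vec x = dim_vec f"
  shows "hinner f (- x) = - hinner f x"
  using assms unfolding hinner_def by (simp add: sum_negf[symmetric])

lemma hinner_append_right:
  assumes "f \<in> carrier_vec (m + n)" "x \<in> carrier_vec m" "y \<in> carrier_vec n"
  shows "hinner f (x @\<^sub>v y) = hinner (vec_first f m) x + hinner (vec_last f n) y"
  using assms unfolding hinner_def vec_first_def vec_last_def
  by (simp add: sum_lessThan_add)

lemma hnorm_sq_append:
  assumes "x \<in> carrier_vec m" "y \<in> carrier_vec n"
  shows "hnorm_sq (x @\<^sub>v y) = hnorm_sq x + hnorm_sq y"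
  using assms unfolding hnorm_sq_def by (simp add: sum_lessThan_add)

lemma hnorm_sq_smult: "hnorm_sq (c \<cdot>\<^sub>v x) = (cmod c)\<^sup>2 * hnorm_sq x"
  unfolding hnorm_sq_def by (simp add: norm_mult power_mult_distrib sum_distrib_left)

lemma hnorm_sq_uminus: "hnorm_sq (- x) = hnorm_sq x"
  unfolding hnorm_sq_def by simp

lemma cmod_parallelogram:
  "(cmod (x + y))\<^sup>2 + (cmod (x - y))\<^sup>2 = 2 * ((cmod x)\<^sup>2 + (cmod y)\<^sup>2)"
  by (simp only: cmod_power2) (simp add: power2_eq_square algebra_simps)

lemma hnorm_sq_parallelogram:
  assumes "u \<in> carrier_vec n" "v \<in> carrier_vec n"
  shows "hnorm_sq (u + v) + hnorm_sq (u - v) = 2 * (hnorm_sq u + hnorm_sq v)"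
  using assms unfolding hnorm_sq_def
  by (simp add: sum.distrib[symmetric] sum_distrib_left cmod_parallelogram)

lemma doubled_frame_mat_carrier:
  "A \<in> carrier_mat M N \<Longrightarrow> doubled_frame_mat c A \<in> carrier_mat (2 * M) (2 * N)"
  unfolding doubled_frame_mat_def by auto

lemma col_doubled_frame_mat:
  assumes A: "A \<in> carrier_mat M N" and j: "j < N"
  shows "col (doubled_frame_mat c A) j = c \<cdot>\<^sub>v col A j @\<^sub>v c \<cdot>\<^sub>v col A j"
    and "col (doubled_frame_mat c A) (N + j) = c \<cdot>\<^sub>v col A j @\<^sub>v - (c \<cdot>\<^sub>v col A j)"
proof -
  have blocks: "c \<cdot>\<^sub>m A \<in> carrier_mat M N" "- (c \<cdot>\<^sub>m A) \<in> carrier_mat M N"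
    using A by auto
  note col = col_four_block_mat[OF blocks(1) blocks(1) blocks(1) blocks(2)]
  show "col (doubled_frame_mat c A) j = c \<cdot>\<^sub>v col A j @\<^sub>v c \<cdot>\<^sub>v col A j"
    using col(1) A j by (simp add: doubled_frame_mat_def)
  show "col (doubled_frame_mat c A) (N + j) = c \<cdot>\<^sub>v col A j @\<^sub>v - (c \<cdot>\<^sub>v col A j)"
    using col(2)[of "N + j"] A j by (simp add: doubled_frame_mat_def)
qed

lemma frame_sum_doubled_frame_mat:
  assumes A: "A \<in> carrier_mat M N" and f: "f \<in> carrier_vec (M + M)"
  defines "u \<equiv> vec_first f M" and "v \<equiv> vec_last f M"
  shows "frame_sum (doubled_frame_mat c A) f
           = (cmod c)\<^sup>2 * (frame_sum A (u + v) + frame_sum A (u - v))"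
proof -
  have uv: "u \<in> carrier_vec M" "v \<in> carrier_vec M"
    unfolding u_def v_def by simp_all
  have colA: "c \<cdot>\<^sub>v col A j \<in> carrier_vec M" "- (c \<cdot>\<^sub>v col A j) \<in> carrier_vec M" for j
    using A by auto
  have sum_col: "hinner f (col (doubled_frame_mat c A) j) = cnj c * hinner (u + v) (col A j)"
    and diff_col: "hinner f (col (doubled_frame_mat c A) (N + j)) = cnj c * hinner (u - v) (col A j)"
    if "j < N" for j
    using that A uv
    by (simp_all add: col_doubled_frame_mat hinner_append_right[OF f colA(1)]
        hinner_append_right[OF f colA(1) colA(2)] hinner_add_left[OF uv]
        hinner_minus_left[OF uv] hinner_smult_right hinner_uminus_right
        flip: u_def v_def, simp_all add: algebra_simps)
  have dim: "dim_col (doubled_frame_mat c A) = N + N"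
    using doubled_frame_mat_carrier[OF A, of c] by simp
  show ?thesis
    unfolding frame_sum_def dim sum_lessThan_add using A
    by (simp add: sum_col diff_col norm_mult power_mult_distrib sum_distrib_left distrib_left)
qed

lemma hnorm_sq_sum_diff_halves:
  assumes f: "f \<in> carrier_vec (M + M)"
  shows "hnorm_sq (vec_first f M + vec_last f M) + hnorm_sq (vec_first f M - vec_last f M)
           = 2 * hnorm_sq f"
proof -
  have "hnorm_sq f = hnorm_sq (vec_first f M @\<^sub>v vec_last f M)"
    using f by simp
  then show ?thesis
    by (simp add: hnorm_sq_parallelogram[OF vec_first_carrier vec_last_carrier]
        hnorm_sq_append[OF vec_first_carrier vec_last_carrier])
qed

lemma frame_sum_doubled_frame_matE:
  assumes A: "A \<in> carrier_mat M N" and f: "f \<in> carrier_vec (dim_row (doubled_frame_mat c A))"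
  obtains u v where "u \<in> carrier_vec (dim_row A)" "v \<in> carrier_vec (dim_row A)"
    and "frame_sum (doubled_frame_mat c A) f = (cmod c)\<^sup>2 * (frame_sum A u + frame_sum A v)"
    and "hnorm_sq u + hnorm_sq v = 2 * hnorm_sq f"
proof
  have f': "f \<in> carrier_vec (M + M)"
    using f doubled_frame_mat_carrier[OF A, of c] by (simp add: mult_2)
  show "vec_first f M + vec_last f M \<in> carrier_vec (dim_row A)"
    and "vec_first f M - vec_last f M \<in> carrier_vec (dim_row A)"
    using A by auto
  show "frame_sum (doubled_frame_mat c A) f = (cmod c)\<^sup>2 *
      (frame_sum A (vec_first f M + vec_last f M) + frame_sum A (vec_first f M - vec_last f M))"
    using frame_sum_doubled_frame_mat[OF A f'] .
  show "hnorm_sq (vec_first f M + vec_last f M) + hnorm_sq (vec_first f M - vec_last f M)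
      = 2 * hnorm_sq f"
    using hnorm_sq_sum_diff_halves[OF f'] .
qed

lemma is_frame_doubled_frame_mat:
  assumes A: "A \<in> carrier_mat M N" and frame: "is_frame A" and "c \<noteq> 0"
  shows "is_frame (doubled_frame_mat c A)"
proof -
  obtain a b where ab: "0 < a" "a \<le> b" and bounds:
    "\<And>g. g \<in> carrier_vec (dim_row A) \<Longrightarrow> a * hnorm_sq g \<le> frame_sum A g \<and> frame_sum A g \<le> b * hnorm_sq g"
    using frame unfolding is_frame_def by blast
  have c: "0 < (cmod c)\<^sup>2" using \<open>c \<noteq> 0\<close> by simp
  show ?thesis
    unfolding is_frame_def
  proof (intro exI conjI ballI)
    show "0 < 2 * (cmod c)\<^sup>2 * a" "2 * (cmod c)\<^sup>2 * a \<le> 2 * (cmod c)\<^sup>2 * b"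
      using ab c by simp_all
  next
    fix f :: "complex vec" assume "f \<in> carrier_vec (dim_row (doubled_frame_mat c A))"
    then obtain u v where uv: "u \<in> carrier_vec (dim_row A)" "v \<in> carrier_vec (dim_row A)"
      and sum: "frame_sum (doubled_frame_mat c A) f = (cmod c)\<^sup>2 * (frame_sum A u + frame_sum A v)"
      and norm: "hnorm_sq u + hnorm_sq v = 2 * hnorm_sq f"
      by (rule frame_sum_doubled_frame_matE[OF A])
    have lower: "a * (2 * hnorm_sq f) \<le> frame_sum A u + frame_sum A v"
      and upper: "frame_sum A u + frame_sum A v \<le> b * (2 * hnorm_sq f)"
      using bounds[OF uv(1)] bounds[OF uv(2)] unfolding norm[symmetric] by (simp_all add: distrib_left)
    show "2 * (cmod c)\<^sup>2 * a * hnorm_sq f \<le> frame_sum (doubled_frame_mat c A) f"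
      using mult_left_mono[OF lower, of "(cmod c)\<^sup>2"] c unfolding sum by (simp add: algebra_simps)
    show "frame_sum (doubled_frame_mat c A) f \<le> 2 * (cmod c)\<^sup>2 * b * hnorm_sq f"
      using mult_left_mono[OF upper, of "(cmod c)\<^sup>2"] c unfolding sum by (simp add: algebra_simps)
  qed
qed

lemma is_tight_frame_doubled_frame_mat:
  assumes A: "A \<in> carrier_mat M N" and tight: "is_tight_frame A" and "c \<noteq> 0"
  shows "is_tight_frame (doubled_frame_mat c A)"
proof -
  obtain a where "0 < a" and bound: "\<And>g. g \<in> carrier_vec (dim_row A) \<Longrightarrow> frame_sum A g = a * hnorm_sq g"
    using tight unfolding is_tight_frame_def by blast
  show ?thesis
    unfolding is_tight_frame_def
  proof (intro exI conjI ballI)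
    show "0 < 2 * (cmod c)\<^sup>2 * a" using \<open>0 < a\<close> \<open>c \<noteq> 0\<close> by simp
  next
    fix f :: "complex vec" assume "f \<in> carrier_vec (dim_row (doubled_frame_mat c A))"
    then obtain u v where uv: "u \<in> carrier_vec (dim_row A)" "v \<in> carrier_vec (dim_row A)"
      and sum: "frame_sum (doubled_frame_mat c A) f = (cmod c)\<^sup>2 * (frame_sum A u + frame_sum A v)"
      and norm: "hnorm_sq u + hnorm_sq v = 2 * hnorm_sq f"
      by (rule frame_sum_doubled_frame_matE[OF A])
    show "frame_sum (doubled_frame_mat c A) f = 2 * (cmod c)\<^sup>2 * a * hnorm_sq f"
      unfolding sum bound[OF uv(1)] bound[OF uv(2)] distrib_left[symmetric] norm
      by (simp add: algebra_simps)
  qed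
qed

lemma hnorm_sq_col_doubled_frame_mat:
  assumes A: "A \<in> carrier_mat M N" and j: "j < N"
  shows "hnorm_sq (col (doubled_frame_mat c A) j) = 2 * (cmod c)\<^sup>2 * hnorm_sq (col A j)"
    and "hnorm_sq (col (doubled_frame_mat c A) (N + j)) = 2 * (cmod c)\<^sup>2 * hnorm_sq (col A j)"
proof -
  have colA: "c \<cdot>\<^sub>v col A j \<in> carrier_vec M" "- (c \<cdot>\<^sub>v col A j) \<in> carrier_vec M"
    using A by auto
  show "hnorm_sq (col (doubled_frame_mat c A) j) = 2 * (cmod c)\<^sup>2 * hnorm_sq (col A j)"
    "hnorm_sq (col (doubled_frame_mat c A) (N + j)) = 2 * (cmod c)\<^sup>2 * hnorm_sq (col A j)"
    using A j by (simp_all add: col_doubled_frame_mat hnorm_sq_append[OF colA(1) colA(1)]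
        hnorm_sq_append[OF colA] hnorm_sq_uminus hnorm_sq_smult)
qed

lemma is_equal_norm_frame_doubled_frame_mat:
  assumes A: "A \<in> carrier_mat M N" and equal_norm: "is_equal_norm_frame A" and "c \<noteq> 0"
  shows "is_equal_norm_frame (doubled_frame_mat c A)"
proof -
  obtain r where r: "\<And>i. i < N \<Longrightarrow> hnorm_sq (col A i) = r"
    using equal_norm A unfolding is_equal_norm_frame_def by auto
  have "hnorm_sq (col (doubled_frame_mat c A) j) = 2 * (cmod c)\<^sup>2 * r"
    if "j < dim_col (doubled_frame_mat c A)" for j
  proof (cases "j < N")
    case True
    then show ?thesis using hnorm_sq_col_doubled_frame_mat(1)[OF A] r by simp
  next
    case False
    then have "j - N < N" "j = N + (j - N)"
      using that doubled_frame_mat_carrier[OF A, of c] by auto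
    then show ?thesis using hnorm_sq_col_doubled_frame_mat(2)[OF A] r by metis
  qed
  then show ?thesis
    using is_frame_doubled_frame_mat[OF A _ \<open>c \<noteq> 0\<close>] equal_norm
    unfolding is_equal_norm_frame_def by blast
qed

theorem proposition3p3:
  fixes A :: "complex mat" and c :: complex and M N :: nat
  assumes "A \<in> carrier_mat M N" and "is_frame A" and "c \<noteq> 0"
  defines "B \<equiv> four_block_mat (c \<cdot>\<^sub>m A) (c \<cdot>\<^sub>m A) (c \<cdot>\<^sub>m A) (- (c \<cdot>\<^sub>m A))"
  shows "B \<in> carrier_mat (2 * M) (2 * N) \<and> is_frame B
     \<and> (is_tight_frame A \<longrightarrow> is_tight_frame B)
     \<and> (is_equal_norm_frame A \<longrightarrow> is_equal_norm_frame B)"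
proof -
  have B: "B = doubled_frame_mat c A"
    unfolding B_def doubled_frame_mat_def ..
  show ?thesis
    unfolding B using assms(1-3)
    by (simp add: doubled_frame_mat_carrier is_frame_doubled_frame_mat
        is_tight_frame_doubled_frame_mat is_equal_norm_frame_doubled_frame_mat)
qed

end
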